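(* Let $G=(V,E)$ be an unweighted undirected graph on $n$ nodes and let $D\ge 2$ be an integer. Let $R$ be a random multiset of $\lceil 2\frac{n}{D}\ln D\rceil$ elements, each chosen uniformly and independently at random from $V$. For a node $u$, call a node $v$ uncovered for $u$ if $dist_G(u,v)\ge D$ and no node of $R$ lies on any shortest path between $u$ and $v$; call $u$ sick if it has more than $\frac{n}{D}$ uncovered nodes. Let $S$ be the set of sick nodes. Then \[ \Pr\!\left[|S|\ge 2\frac{n}{D}\right]\le \frac12. \]
   Context: $dist_G(u,v)$ denotes the shortest-path distance (number of edges) in $G$. A shortest path between $u$ and $v$ includes its endpoints $u$ and $v$. *)

theory Defs
  imports "HOL-Probability.Probability"
begin

definition is_walk :: "'a set \<Rightarrow> ('a \<Rightarrow> 'a \<Rightarrow> bool) \<Rightarrow> 'a list \<Rightarrow> bool" where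
  "is_walk V E p \<longleftrightarrow> p \<noteq> [] \<and> set p \<subseteq> V \<and>
     (\<forall>i. Suc i < length p \<longrightarrow> E (p ! i) (p ! Suc i))"

definition walk_between :: "'a set \<Rightarrow> ('a \<Rightarrow> 'a \<Rightarrow> bool) \<Rightarrow> 'a \<Rightarrow> 'a \<Rightarrow> 'a list \<Rightarrow> bool" where
  "walk_between V E u v p \<longleftrightarrow> is_walk V E p \<and> hd p = u \<and> last p = v"

definition reachable :: "'a set \<Rightarrow> ('a \<Rightarrow> 'a \<Rightarrow> bool) \<Rightarrow> 'a \<Rightarrow> 'a \<Rightarrow> bool" where
  "reachable V E u v \<longleftrightarrow> (\<exists>p. walk_between V E u v p)"

definition gdist :: "'a set \<Rightarrow> ('a \<Rightarrow> 'a \<Rightarrow> bool) \<Rightarrow> 'a \<Rightarrow> 'a \<Rightarrow> nat" where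
  "gdist V E u v = (LEAST d. \<exists>p. walk_between V E u v p \<and> length p = Suc d)"

definition shortest_path :: "'a set \<Rightarrow> ('a \<Rightarrow> 'a \<Rightarrow> bool) \<Rightarrow> 'a \<Rightarrow> 'a \<Rightarrow> 'a list \<Rightarrow> bool" where
  "shortest_path V E u v p \<longleftrightarrow> walk_between V E u v p \<and> length p = Suc (gdist V E u v)"

(* v is uncovered for u w.r.t. the sample R (a list, read as multiset) *)
definition uncovered :: "'a set \<Rightarrow> ('a \<Rightarrow> 'a \<Rightarrow> bool) \<Rightarrow> nat \<Rightarrow> 'a list \<Rightarrow> 'a \<Rightarrow> 'a set" where
  "uncovered V E D R u = {v \<in> V. reachable V E u v \<and> gdist V E u v \<ge> D \<and>
      (\<forall>p. shortest_path V E u v p \<longrightarrow> set p \<inter> set R = {})}"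

definition sick_nodes :: "'a set \<Rightarrow> ('a \<Rightarrow> 'a \<Rightarrow> bool) \<Rightarrow> nat \<Rightarrow> 'a list \<Rightarrow> 'a set" where
  "sick_nodes V E D R = {u \<in> V. real (card (uncovered V E D R u)) > real (card V) / real D}"

end

theory Submission imports Defs begin

text \<open>A shortest \<open>u\<close>--\<open>v\<close> path has at least \<open>D\<close>
  distinct vertices, so a single sample misses it with probability at most \<open>1 - D/n\<close>, and all
  \<open>\<lceil>2(n/D) ln D\<rceil>\<close> samples miss it with probability at most \<open>exp (-2 ln D) = 1/D\<^sup>2\<close>.
  Hence the expected number of uncovered pairs is at most \<open>n\<^sup>2/D\<^sup>2\<close>. Every sick node accounts
  for more than \<open>n/D\<close> of these pairs, so the expected number of sick nodes is at most \<open>n/D\<close>,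
  and Markov's inequality finishes the proof.\<close>

lemma is_walk_iff_successively:
  "is_walk V E p \<longleftrightarrow> p \<noteq> [] \<and> set p \<subseteq> V \<and> successively E p"
  by (simp add: is_walk_def successively_conv_nth)

lemma walk_between_remove_cycle:
  assumes "walk_between V E u v (xs @ y # ys @ y # zs)"
  shows "walk_between V E u v (xs @ y # zs)"
proof -
  have walk: "set (xs @ y # ys @ y # zs) \<subseteq> V" "successively E (xs @ y # ys @ y # zs)"
    using assms by (simp_all add: walk_between_def is_walk_iff_successively)
  have "successively E xs" "xs = [] \<or> E (last xs) y"
    using walk(2) by (simp_all add: successively_append_iff)
  moreover have "successively E (y # zs)"
    using walk(2) successively_append_iff[of E "xs @ y # ys" "y # zs"] by simp
  ultimately have "successively E (xs @ y # zs)"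
    by (simp add: successively_append_iff)
  moreover have "hd (xs @ y # zs) = u"
    using assms by (cases xs) (simp_all add: walk_between_def)
  moreover have "last (xs @ y # zs) = v"
    using assms by (cases zs) (simp_all add: walk_between_def)
  ultimately show ?thesis
    using walk(1) by (auto simp: walk_between_def is_walk_iff_successively)
qed

lemma gdist_le_walk_length:
  assumes "walk_between V E u v p"
  shows "Suc (gdist V E u v) \<le> length p"
proof -
  from assms have "p \<noteq> []" by (simp add: walk_between_def is_walk_def)
  then obtain d where d: "length p = Suc d" by (cases p) auto
  with assms have "gdist V E u v \<le> d" unfolding gdist_def by (intro Least_le) blast
  with d show ?thesis by simp
qed

lemma shortest_path_exists:
  assumes "reachable V E u v"
  obtains p where "shortest_path V E u v p"
proof -
  obtain p where p: "walk_between V E u v p" using assms by (auto simp: reachable_def)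
  then have "p \<noteq> []" by (simp add: walk_between_def is_walk_def)
  with p have "\<exists>d q. walk_between V E u v q \<and> length q = Suc d"
    by (intro exI[of _ "length p - 1"] exI[of _ p]) simp
  then have "\<exists>q. walk_between V E u v q \<and> length q = Suc (gdist V E u v)"
    unfolding gdist_def by (rule LeastI_ex)
  then show ?thesis using that by (auto simp: shortest_path_def)
qed

lemma shortest_path_distinct:
  assumes "shortest_path V E u v p"
  shows "distinct p"
proof (rule ccontr)
  assume "\<not> distinct p"
  then obtain xs y ys zs where "p = xs @ [y] @ ys @ [y] @ zs"
    using not_distinct_decomp by blast
  then have p: "p = xs @ y # ys @ y # zs" by simp
  with assms have "walk_between V E u v (xs @ y # ys @ y # zs)"
    by (simp add: shortest_path_def)
  then have "walk_between V E u v (xs @ y # zs)" by (rule walk_between_remove_cycle)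
  then have "Suc (gdist V E u v) \<le> length (xs @ y # zs)" by (rule gdist_le_walk_length)
  with assms p show False by (simp add: shortest_path_def)
qed

lemma card_set_shortest_path:
  "shortest_path V E u v p \<Longrightarrow> card (set p) = Suc (gdist V E u v)"
  using shortest_path_distinct[of V E u v p] by (simp add: shortest_path_def distinct_card)

lemma finite_set_pmf_replicate_pmf:
  "finite (set_pmf p) \<Longrightarrow> finite (set_pmf (replicate_pmf k p))"
  by (simp add: set_replicate_pmf lists_eq_set finite_lists_length_eq)

lemma emeasure_replicate_pmf_avoid:
  "emeasure (replicate_pmf k p) {R. set R \<inter> A = {}} = ennreal (measure_pmf.prob p (- A) ^ k)"
proof (induction k)
  case 0
  then show ?case by (simp add: measure_pmf.emeasure_eq_measure)
next
  case (Suc k)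
  have cons_preimage: "(#) x -` {R. set R \<inter> A = {}} = (if x \<in> A then {} else {R. set R \<inter> A = {}})"
    for x by auto
  have "emeasure (replicate_pmf (Suc k) p) {R. set R \<inter> A = {}}
      = (\<integral>\<^sup>+x. ennreal (measure_pmf.prob p (- A) ^ k) * indicator (- A) x \<partial>p)"
    using Suc.IH by (auto simp: map_pmf_def[symmetric] cons_preimage indicator_def intro!: nn_integral_cong)
  also have "\<dots> = ennreal (measure_pmf.prob p (- A) ^ k) * emeasure p (- A)"
    by (rule nn_integral_cmult_indicator) simp
  finally show ?case
    by (simp add: measure_pmf.emeasure_eq_measure ennreal_mult'' mult.commute)
qed

lemma prob_replicate_pmf_avoid:
  "measure_pmf.prob (replicate_pmf k p) {R. set R \<inter> A = {}} = measure_pmf.prob p (- A) ^ k"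
  using emeasure_replicate_pmf_avoid[of k p A] by (simp add: measure_pmf.emeasure_eq_measure)

lemma one_minus_power_le_exp:
  fixes x :: real
  assumes "x \<le> 1"
  shows "(1 - x) ^ k \<le> exp (- x * k)"
proof -
  have "(1 - x) ^ k \<le> exp (- x) ^ k"
    using assms exp_ge_add_one_self[of "- x"] by (intro power_mono) auto
  then show ?thesis by (simp add: exp_of_nat_mult[symmetric] mult.commute)
qed

lemma prob_uncovered_le:
  assumes "finite V" "V \<noteq> {}" "D \<ge> 2"
    and k: "real k \<ge> 2 * (real (card V) / real D) * ln (real D)"
  shows "measure_pmf.prob (replicate_pmf k (pmf_of_set V)) {R. v \<in> uncovered V E D R u}
           \<le> 1 / (real D)\<^sup>2"
proof (cases "v \<in> V \<and> reachable V E u v \<and> gdist V E u v \<ge> D")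
  case True
  then obtain p where p: "shortest_path V E u v p" by (blast elim: shortest_path_exists)
  have pV: "set p \<subseteq> V"
    using p by (simp add: shortest_path_def walk_between_def is_walk_def)
  have n: "card V > 0" using assms by (simp add: card_gt_0_iff)
  have p_le_n: "card (set p) \<le> card V" using \<open>finite V\<close> pV by (rule card_mono)
  have "card (set p) \<ge> D" using p True by (simp add: card_set_shortest_path)
  then have D_le_n: "real D / card V \<le> real (card (set p)) / card V"
    by (simp add: divide_right_mono)
  have "measure_pmf.prob (replicate_pmf k (pmf_of_set V)) {R. v \<in> uncovered V E D R u}
      \<le> measure_pmf.prob (replicate_pmf k (pmf_of_set V)) {R. set R \<inter> set p = {}}"
    using p by (intro measure_pmf.finite_measure_mono) (auto simp: uncovered_def)
  also have "\<dots> = (1 - real (card (set p)) / card V) ^ k"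
    using assms pV n p_le_n
    by (simp add: prob_replicate_pmf_avoid measure_pmf_of_set Diff_eq[symmetric] card_Diff_subset
        of_nat_diff field_simps)
  also have "\<dots> \<le> (1 - real D / card V) ^ k"
    using D_le_n p_le_n n by (intro power_mono) (auto simp: field_simps)
  also have "\<dots> \<le> exp (- (real D / card V) * k)"
    using D_le_n p_le_n n
    by (intro one_minus_power_le_exp) (auto simp: field_simps)
  also have "\<dots> \<le> exp (- (2 * ln (real D)))"
    using k n \<open>D \<ge> 2\<close> by (auto simp: field_simps)
  also have "\<dots> = 1 / (real D)\<^sup>2"
    using \<open>D \<ge> 2\<close> by (simp add: exp_minus exp_double inverse_eq_divide)
  finally show ?thesis .
qed (auto simp: uncovered_def)


lemma card_greater_mult_le_sum:
  fixes f :: "'a \<Rightarrow> real"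
  assumes "finite A" and "\<And>x. x \<in> A \<Longrightarrow> 0 \<le> f x"
  shows "t * card {x \<in> A. t < f x} \<le> sum f A"
proof -
  have "t * card {x \<in> A. t < f x} = (\<Sum>x \<in> {x \<in> A. t < f x}. t)" by simp
  also have "\<dots> \<le> (\<Sum>x \<in> {x \<in> A. t < f x}. f x)" by (rule sum_mono) simp
  also have "\<dots> \<le> sum f A" using assms by (intro sum_mono2) auto
  finally show ?thesis .
qed

lemma expectation_card_uncovered_le:
  assumes "finite V" "V \<noteq> {}" "D \<ge> 2"
    and "real k \<ge> 2 * (real (card V) / real D) * ln (real D)"
  shows "measure_pmf.expectation (replicate_pmf k (pmf_of_set V))
           (\<lambda>R. real (card (uncovered V E D R u))) \<le> card V / (real D)\<^sup>2"
proof -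
  let ?M = "replicate_pmf k (pmf_of_set V)"
  have card_eq: "real (card (uncovered V E D R u))
      = (\<Sum>v\<in>V. indicator {R. v \<in> uncovered V E D R u} R)" for R
  proof -
    have "V \<inter> uncovered V E D R u = uncovered V E D R u" by (auto simp: uncovered_def)
    moreover have "(\<Sum>v\<in>V. indicator {R. v \<in> uncovered V E D R u} R :: real)
        = real (card (V \<inter> uncovered V E D R u))"
      using \<open>finite V\<close> by (simp add: indicator_def sum.If_cases Int_def)
    ultimately show ?thesis by simp
  qed
  have "finite (set_pmf ?M)"
    using assms by (intro finite_set_pmf_replicate_pmf) simp
  then have "measure_pmf.expectation ?M (\<lambda>R. real (card (uncovered V E D R u)))
      = (\<Sum>v\<in>V. measure_pmf.expectation ?M (indicator {R. v \<in> uncovered V E D R u}))"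
    unfolding card_eq by (intro Bochner_Integration.integral_sum integrable_measure_pmf_finite)
  also have "\<dots> = (\<Sum>v\<in>V. measure_pmf.prob ?M {R. v \<in> uncovered V E D R u})"
    by simp
  also have "\<dots> \<le> (\<Sum>v\<in>V. 1 / (real D)\<^sup>2)"
    using assms by (intro sum_mono prob_uncovered_le)
  finally show ?thesis by simp
qed

lemma expectation_card_sick_nodes_le:
  assumes "finite V" "V \<noteq> {}" "D \<ge> 2"
    and "real k \<ge> 2 * (real (card V) / real D) * ln (real D)"
  shows "measure_pmf.expectation (replicate_pmf k (pmf_of_set V))
           (\<lambda>R. real (card (sick_nodes V E D R))) \<le> card V / real D"
proof -
  let ?M = "replicate_pmf k (pmf_of_set V)"
  let ?t = "real (card V) / real D"
  have n: "card V > 0" using assms by (simp add: card_gt_0_iff)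
  have integrable: "integrable ?M f" for f :: "'a list \<Rightarrow> real"
    using assms by (intro integrable_measure_pmf_finite finite_set_pmf_replicate_pmf) simp
  have pointwise: "?t * real (card (sick_nodes V E D R))
      \<le> (\<Sum>u\<in>V. real (card (uncovered V E D R u)))" for R
    unfolding sick_nodes_def using \<open>finite V\<close> by (rule card_greater_mult_le_sum) simp
  have "?t * measure_pmf.expectation ?M (\<lambda>R. real (card (sick_nodes V E D R)))
      = measure_pmf.expectation ?M (\<lambda>R. ?t * real (card (sick_nodes V E D R)))"
    by simp
  also have "\<dots> \<le> measure_pmf.expectation ?M (\<lambda>R. \<Sum>u\<in>V. real (card (uncovered V E D R u)))"
    using pointwise by (intro integral_mono integrable)
  also have "\<dots> = (\<Sum>u\<in>V. measure_pmf.expectation ?M (\<lambda>R. real (card (uncovered V E D R u))))"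
    by (intro Bochner_Integration.integral_sum integrable)
  also have "\<dots> \<le> (\<Sum>u\<in>V. card V / (real D)\<^sup>2)"
    using assms by (intro sum_mono expectation_card_uncovered_le)
  also have "\<dots> = ?t * (card V / real D)"
    by (simp add: power2_eq_square)
  finally show ?thesis
    by (rule mult_left_le_imp_le) (use n \<open>D \<ge> 2\<close> in simp)
qed

theorem lemma3:
  fixes V :: "'a set" and E :: "'a \<Rightarrow> 'a \<Rightarrow> bool" and D n :: nat
  assumes "finite V" and "V \<noteq> {}" and "card V = n"
    and "\<And>x y. E x y \<Longrightarrow> x \<in> V \<and> y \<in> V"
    and "\<And>x y. E x y \<Longrightarrow> E y x"
    and "\<And>x. \<not> E x x"
    and "D \<ge> 2"
  shows "measure_pmf.prob
           (replicate_pmf (nat \<lceil>2 * (real n / real D) * ln (real D)\<rceil>) (pmf_of_set V))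
           {R. real (card (sick_nodes V E D R)) \<ge> 2 * (real n / real D)} \<le> 1 / 2"
proof -
  let ?M = "replicate_pmf (nat \<lceil>2 * (real n / real D) * ln (real D)\<rceil>) (pmf_of_set V)"
  let ?S = "\<lambda>R. real (card (sick_nodes V E D R))"
  have n_pos: "n > 0" using assms(1-3) by (auto simp: card_gt_0_iff)
  then have pos: "0 < 2 * (real n / real D)" using assms(7) by simp
  have "real (nat \<lceil>2 * (real n / real D) * ln (real D)\<rceil>)
      \<ge> 2 * (real (card V) / real D) * ln (real D)"
    unfolding assms(3) by (rule real_nat_ceiling_ge)
  then have expectation: "measure_pmf.expectation ?M ?S \<le> real n / real D"
    using expectation_card_sick_nodes_le[OF assms(1,2,7)] assms(3) by blast
  have "measure_pmf.prob ?M {R \<in> space ?M. ?S R \<ge> 2 * (real n / real D)}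
      \<le> measure_pmf.expectation ?M ?S / (2 * (real n / real D))"
    using assms(1,2) pos
    by (intro integral_Markov_inequality_measure[where A = "{}"]
        integrable_measure_pmf_finite finite_set_pmf_replicate_pmf) auto
  also have "\<dots> \<le> (real n / real D) / (2 * (real n / real D))"
    using expectation pos by (intro divide_right_mono) auto
  also have "\<dots> = 1 / 2" using n_pos assms(7) by simp
  finally show ?thesis by simp
qed

end
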